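(* Let $p$ be a prime with $p \equiv 5 \pmod 8$ and $p = s^2 + 4$ for some odd integer $s$. Let $g$ be a generator of $\mathbb{F}_p^*$, $C_0^{(4)}$ the subgroup of index $4$ of $\mathbb{F}_p^*$, $C_i^{(4)} = g^i C_0^{(4)}$, and $D = C_0^{(4)} \cup C_1^{(4)}$. Let $S_D$ be the set of $a \in \mathbb{F}_p^*$ such that the equation $x - y = a$ has exactly $(p-5)/4$ solutions $(x,y)\in D\times D$. Then $S_D = C_0^{(2)}$ or $S_D = C_1^{(2)}$, where $C_0^{(2)}$ is the subgroup of index $2$ of $\mathbb{F}_p^*$ (the nonzero squares) and $C_1^{(2)} = g C_0^{(2)}$.
   Context: Under the stated hypotheses it is known that $D$ is a $(p,(p-1)/2,(p-5)/4)$-almost difference set of $\mathbb{F}_p^+$, i.e. exactly $(p-1)/2$ nonzero $a$ give $(p-5)/4$ solutions of $x-y=a$ in $D\times D$ and all other nonzero $a$ give $(p-1)/4$ solutions. *)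

theory Defs
  imports "HOL-Number_Theory.Number_Theory"
begin

text \<open>The field F_p is modelled by the residues {0..p-1} (natural numbers) with
 arithmetic modulo p; F_p^* is {1..p-1}.\<close>

definition is_generator :: "nat \<Rightarrow> nat \<Rightarrow> bool" where
  "is_generator p g \<longleftrightarrow> g \<in> {1..p-1} \<and> ord p g = p - 1"

definition cyclotomic_class :: "nat \<Rightarrow> nat \<Rightarrow> nat \<Rightarrow> nat \<Rightarrow> nat set" where
  "cyclotomic_class p g e i = {x \<in> {1..p-1}. \<exists>k::nat. [x = g ^ (e * k + i)] (mod p)}"

definition diff_count :: "nat \<Rightarrow> nat set \<Rightarrow> nat \<Rightarrow> nat" where
  "diff_count p D a = card {(x, y). x \<in> D \<and> y \<in> D \<and> [int x - int y = int a] (mod int p)}"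

end

theory Submission
  imports Defs
begin

text \<open>Let \<open>\<chi>\<close> be the quartic character of \<open>\<int>/p\<close> with \<open>\<chi>(g) = \<i>\<close>. The indicator of
  \<open>D = C\<^sub>0 \<union> C\<^sub>1\<close> is \<open>(2\<chi>\<^sup>4 + (1 - \<i>)\<chi> + (1 + \<i>)\<chi>\<^sup>3)/4\<close>, so the number \<open>N(a)\<close> of
  representations \<open>a = x - y\<close> expands into nine correlations
  \<open>\<Sum>\<^sub>z \<chi>(z + a)\<^sup>j \<chi>(z)\<^sup>k\<close>. Substituting \<open>z = a t\<close> pulls out \<open>\<chi>(a)\<^sup>j\<^sup>+\<^sup>k\<close>, and all the
  remaining sums are elementary except the Jacobi sum \<open>J = \<Sum>\<^sub>t \<chi>(t + 1) \<chi>(t)\<close> and its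
  conjugate. Using \<open>\<chi>(-1) = -1\<close> (that is, \<open>p \<equiv> 5 mod 8\<close>) this gives
  \<open>4 N(a) = p - 3 + \<chi>(a)\<^sup>2 Im J\<close>. Now \<open>J\<close> is a Gaussian integer of norm \<open>p\<close>, and \<open>Im J\<close> is
  even because \<open>N(1)\<close> is an integer; as \<open>p = s\<^sup>2 + 4\<close> and a prime is a sum of two squares in
  essentially one way, \<open>Im J = \<plusminus>2\<close>. So \<open>N(a) = (p - 5)/4\<close> exactly on the squares or exactly
  on the non-squares, depending on the sign of \<open>Im J\<close>.\<close>

lemma sum_residues_shift:
  fixes P d :: int and f :: "int \<Rightarrow> 'a::comm_monoid_add"
  assumes "P > 0" and "\<And>x. f (x mod P) = f x"
  shows "(\<Sum>x\<in>{0..<P}. f (x + d)) = (\<Sum>x\<in>{0..<P}. f x)"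
proof -
  have "(\<Sum>x\<in>{0..<P}. f (x + d)) = (\<Sum>x\<in>{0..<P}. f ((x + d) mod P))"
    by (simp add: assms(2))
  also have "\<dots> = (\<Sum>x\<in>{0..<P}. f x)"
    by (rule sum.reindex_bij_witness[where i="\<lambda>y. (y - d) mod P" and j="\<lambda>x. (x + d) mod P"])
       (use assms(1) in \<open>auto simp: mod_simps\<close>)
  finally show ?thesis .
qed

lemma sum_residues_scale:
  fixes P c :: int and f :: "int \<Rightarrow> 'a::comm_monoid_add"
  assumes "prime P" and "c mod P \<noteq> 0" and "\<And>x. f (x mod P) = f x"
  shows "(\<Sum>x\<in>{0..<P}. f (c * x)) = (\<Sum>x\<in>{0..<P}. f x)"
proof -
  have "coprime c P"
    using assms(1,2) by (simp add: prime_imp_coprime coprime_commute dvd_eq_mod_eq_0)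
  then obtain c' where c': "[c * c' = 1] (mod P)"
    using cong_solve_coprime_int by blast
  have inverse: "(c * (c' * x)) mod P = x mod P" "(c' * (c * x)) mod P = x mod P" for x
    using cong_scalar_right[OF c', of x] by (simp_all add: cong_def ac_simps)
  have "(\<Sum>x\<in>{0..<P}. f (c * x)) = (\<Sum>x\<in>{0..<P}. f ((c * x) mod P))"
    by (simp add: assms(3))
  also have "\<dots> = (\<Sum>x\<in>{0..<P}. f x)"
    by (rule sum.reindex_bij_witness[where i="\<lambda>y. (c' * y) mod P" and j="\<lambda>x. (c * x) mod P"])
       (use assms(1) prime_gt_0_int in \<open>auto simp: mod_simps inverse\<close>)
  finally show ?thesis .
qed

lemma power_i_mod_4: "(\<i>::complex) ^ n = \<i> ^ (n mod 4)"
proof -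
  have "(\<i>::complex) ^ n = (\<i> ^ 4) ^ (n div 4) * \<i> ^ (n mod 4)"
    by (simp only: power_mult [symmetric] power_add [symmetric] mult_div_mod_eq)
  moreover have "(\<i>::complex) ^ 4 = 1"
    by (simp add: numeral_eq_Suc)
  ultimately show ?thesis
    by simp
qed

lemma power_i_eq_iff: "(\<i>::complex) ^ m = \<i> ^ n \<longleftrightarrow> [m = n] (mod 4)"
proof -
  have "m mod 4 < 4" "n mod 4 < 4" by simp_all
  moreover have "(\<i>::complex) ^ a = \<i> ^ b \<longleftrightarrow> a = b" if "a < 4" "b < 4" for a b
    using that by (auto simp: less_Suc_eq numeral_eq_Suc complex_eq_iff)
  ultimately have "(\<i>::complex) ^ (m mod 4) = \<i> ^ (n mod 4) \<longleftrightarrow> m mod 4 = n mod 4"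
    by blast
  then show ?thesis
    by (metis power_i_mod_4 cong_def)
qed

text \<open>Both sides equal \<open>\<Sum>\<^sub>t\<^sub>,\<^sub>u f(t) cnj(f(u)) B(t - u)\<close>.\<close>

lemma sum_correlation_norm_square:
  fixes P :: int and f :: "int \<Rightarrow> complex"
  assumes P: "P > 0" and periodic: "\<And>x. f (x mod P) = f x"
  defines "A c \<equiv> \<Sum>t\<in>{0..<P}. f (t + c) * f t"
    and "B e \<equiv> \<Sum>z\<in>{0..<P}. f (z + e) * cnj (f z)"
  shows "(\<Sum>c\<in>{0..<P}. A c * cnj (A c)) = (\<Sum>e\<in>{0..<P}. B e * B e)"
proof -
  have periodic_add: "f ((x mod P) + y) = f (x + y)" for x y
    by (metis periodic mod_add_left_eq)
  have B_periodic: "B (e mod P) = B e" for e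
    unfolding B_def by (metis periodic_add add.commute)
  have inner: "(\<Sum>c\<in>{0..<P}. f (t + c) * cnj (f (u + c))) = B (t - u)" for t u
  proof -
    have "(\<Sum>c\<in>{0..<P}. f (t + c) * cnj (f (u + c)))
        = (\<Sum>c\<in>{0..<P}. (\<lambda>z. f (z + (t - u)) * cnj (f z)) (c + u))"
      by (simp add: ac_simps)
    also have "\<dots> = B (t - u)"
      unfolding B_def by (rule sum_residues_shift) (use P periodic periodic_add in simp_all)
    finally show ?thesis .
  qed
  have outer: "(\<Sum>t\<in>{0..<P}. f t * cnj (f u) * B (t - u))
      = (\<Sum>e\<in>{0..<P}. f (e + u) * cnj (f u) * B e)" for u
  proof -
    have "(\<Sum>t\<in>{0..<P}. f t * cnj (f u) * B (t - u))
        = (\<Sum>t\<in>{0..<P}. (\<lambda>e. f (e + u) * cnj (f u) * B e) (t + - u))"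
      by simp
    also have "\<dots> = (\<Sum>e\<in>{0..<P}. f (e + u) * cnj (f u) * B e)"
      by (rule sum_residues_shift) (use P periodic_add B_periodic in simp_all)
    finally show ?thesis .
  qed
  have "(\<Sum>c\<in>{0..<P}. A c * cnj (A c))
      = (\<Sum>c\<in>{0..<P}. \<Sum>t\<in>{0..<P}. \<Sum>u\<in>{0..<P}.
           f t * cnj (f u) * (f (t + c) * cnj (f (u + c))))"
    unfolding A_def cnj_sum sum_product by (simp add: ac_simps)
  also have "\<dots> = (\<Sum>t\<in>{0..<P}. \<Sum>u\<in>{0..<P}. f t * cnj (f u) * B (t - u))"
    by (subst sum.swap, rule sum.cong[OF refl], subst sum.swap)
       (simp add: sum_distrib_left [symmetric] inner)
  also have "\<dots> = (\<Sum>e\<in>{0..<P}. \<Sum>u\<in>{0..<P}. f (e + u) * cnj (f u) * B e)"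
    by (subst sum.swap) (simp only: outer, rule sum.swap)
  also have "\<dots> = (\<Sum>e\<in>{0..<P}. B e * B e)"
    unfolding B_def by (simp add: sum_distrib_right add.commute)
  finally show ?thesis .
qed

lemma cong_diff_iff_mod_eq:
  fixes x y a m :: int
  shows "[x - y = a] (mod m) \<longleftrightarrow> (y + a) mod m = x mod m"
  by (metis cong_def cong_diff_iff_cong_0 diff_diff_eq)

lemma diff_count_eq_card:
  assumes "D \<subseteq> {..<p}"
  shows "diff_count p D a = card {z \<in> int ` D. (z + int a) mod int p \<in> int ` D}"
  unfolding diff_count_def cong_diff_iff_mod_eq
  by (rule bij_betw_same_card[of "\<lambda>(x, y). int y"],
      rule bij_betw_byWitness[where f'="\<lambda>z. (nat ((z + int a) mod int p), nat z)"])
     (use assms in \<open>auto simp: subset_eq\<close>)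

text \<open>By the identity \<open>(As + 2B)\<^sup>2 + (2A - Bs)\<^sup>2 = (A\<^sup>2 + B\<^sup>2)(s\<^sup>2 + 4) = p\<^sup>2\<close>, a multiple of \<open>p\<close>
  that is nonzero (by parity) forces \<open>(As + 2B)\<^sup>2 = p\<^sup>2\<close> and \<open>2A = Bs\<close>.\<close>

lemma two_squares_even_square_eq_4_aux:
  fixes A B s p :: int
  assumes "p > 0" and sum_sq: "A^2 + B^2 = p" and p_eq: "s^2 + 4 = p"
    and "even B" and "odd s" and "p dvd A * s + 2 * B"
  shows "B^2 = 4"
proof -
  obtain m where m: "A * s + 2 * B = p * m"
    using assms(6) by blast
  have "odd p"
    using p_eq \<open>odd s\<close> by auto
  then have "odd (A^2 + B^2)"
    using sum_sq by simp
  then have "odd A"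
    using \<open>even B\<close> by auto
  have "m \<noteq> 0"
    using m \<open>odd A\<close> \<open>odd s\<close> by (metis even_mult_iff add_0 even_add dvd_add_times_triv_left_iff)
  have "(A * s + 2 * B)^2 + (2 * A - B * s)^2 = (A^2 + B^2) * (s^2 + 4)"
    by (simp add: algebra_simps power2_eq_square)
  also have "\<dots> = p^2"
    using sum_sq p_eq by (simp add: power2_eq_square)
  finally have sq: "p^2 * m^2 + (2 * A - B * s)^2 = p^2 * 1"
    using m by (simp add: power_mult_distrib)
  then have "p^2 * m^2 \<le> p^2 * 1"
    by (metis le_add_same_cancel1 zero_le_power2)
  then have "m^2 \<le> 1"
    using \<open>p > 0\<close> by simp
  with \<open>m \<noteq> 0\<close> have "m^2 = 1"
    by (smt (verit, ccfv_threshold) power2_less_eq_zero_iff)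
  with sq have "2 * A = B * s"
    by simp
  obtain c where c: "B = 2 * c"
    using \<open>even B\<close> by (rule evenE)
  with \<open>2 * A = B * s\<close> have "c^2 * (s^2 + 4) = A^2 + B^2"
    by (simp add: algebra_simps power2_eq_square)
  then have "c^2 = 1"
    using sum_sq p_eq \<open>p > 0\<close> by simp
  then show ?thesis
    using c by (simp add: power_mult_distrib)
qed

lemma prime_two_squares_even_square_eq_4:
  fixes A B s p :: int
  assumes "prime p" and "A^2 + B^2 = p" and "s^2 + 4 = p" and "even B" and "odd s"
  shows "B^2 = 4"
proof -
  have "(A * s + 2 * B) * (A * s - 2 * B) = A^2 * s^2 - 4 * B^2"
    by (simp add: algebra_simps power2_eq_square)
  also have "\<dots> = (p - B^2) * (p - 4) - 4 * B^2"
    using assms(2,3) add_diff_cancel_left' by fastforce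
  also have "\<dots> = p * (p - 4 - B^2)"
    by (simp add: algebra_simps)
  finally have "(A * s + 2 * B) * (A * s - 2 * B) = p * (p - 4 - B^2)" .
  then have "p dvd (A * s + 2 * B) * (A * s - 2 * B)"
    by simp
  then have "p dvd A * s + 2 * B \<or> p dvd A * s + 2 * (- B)"
    using assms(1) prime_dvd_mult_iff by auto
  then show ?thesis
    using two_squares_even_square_eq_4_aux[of p A B s] two_squares_even_square_eq_4_aux[of p A "- B" s]
      assms prime_gt_0_int by auto
qed

lemma cyclotomic_class_subset: "cyclotomic_class p g e i \<subseteq> {1..p-1}"
  by (auto simp: cyclotomic_class_def)

locale quartic_character =
  fixes p g :: nat
  assumes prime_p: "prime p" and p_mod_4: "p mod 4 = 1" and generator: "is_generator p g"
begin

abbreviation P :: int where "P \<equiv> int p"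

abbreviation Zp :: "int set" where "Zp \<equiv> {0..<P}"

lemma p_gt_1: "p > 1"
  using prime_p prime_gt_1_nat by blast

lemma P_prime: "prime P"
  using prime_p by simp

lemma four_dvd_p_minus_1: "4 dvd p - 1"
  using p_mod_4 by presburger

lemma ord_g: "ord p g = p - 1"
  using generator by (simp add: is_generator_def)

lemma coprime_p_g: "coprime p g"
proof -
  have "g \<in> {1..p-1}"
    using generator by (simp add: is_generator_def)
  then have "\<not> p dvd g"
    using p_gt_1 by (auto dest: dvd_imp_le)
  then show ?thesis
    using prime_p by (simp add: prime_imp_coprime)
qed

lemma int_mod_P_eq_self: "x \<in> {1..p-1} \<Longrightarrow> int x mod P = int x"
  by auto

lemma ex_generator_power_cong:
  assumes "x mod P \<noteq> 0"
  shows "\<exists>k. [int g ^ k = x] (mod P)"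
proof -
  have "residue_primroot p g"
    using coprime_p_g ord_g p_gt_1 prime_p by (simp add: residue_primroot_def totient_prime)
  moreover have "0 < x mod P" "x mod P < P"
    using assms p_gt_1 by (simp_all add: order_le_neq_trans)
  then have "nat (x mod P) \<in> totatives p"
    using prime_p by (auto simp: totatives_prime nat_less_iff)
  ultimately obtain k where "g ^ k mod p = nat (x mod P)"
    using residue_primroot_is_generator[OF p_gt_1] unfolding bij_betw_def by force
  then have "int g ^ k mod P = x mod P"
    using p_gt_1 by (metis of_nat_mod of_nat_power int_nat_eq pos_mod_sign of_nat_0_less_iff
      less_trans zero_less_one)
  then show ?thesis
    by (auto simp: cong_def)
qed

text \<open>The exponent chosen by \<open>SOME\<close> is a discrete logarithm, determined modulo \<open>p - 1\<close>;
  since \<open>4\<close> divides \<open>p - 1\<close>, the value \<open>\<i>\<^sup>k\<close> does not depend on the choice.\<close>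

definition chi :: "int \<Rightarrow> complex" where
  "chi x = (if x mod P = 0 then 0 else \<i> ^ (SOME k. [int g ^ k = x] (mod P)))"

lemma chi_eq_power:
  assumes "x mod P \<noteq> 0" and "[int g ^ k = x] (mod P)"
  shows "chi x = \<i> ^ k"
proof -
  define k0 where "k0 = (SOME k. [int g ^ k = x] (mod P))"
  have "[int g ^ k0 = x] (mod P)"
    unfolding k0_def using ex_generator_power_cong[OF assms(1)] by (rule someI_ex)
  then have "[int g ^ k0 = int g ^ k] (mod P)"
    using assms(2) by (metis cong_sym cong_trans)
  then have "[g ^ k0 = g ^ k] (mod p)"
    by (metis cong_int_iff of_nat_power)
  then have "[k0 = k] (mod p - 1)"
    using order_divides_expdiff[OF coprime_p_g] ord_g by simp
  then have "[k0 = k] (mod 4)"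
    using four_dvd_p_minus_1 cong_dvd_modulus_nat by blast
  then show ?thesis
    using assms(1) by (simp add: chi_def k0_def power_i_eq_iff)
qed

lemma chi_zero: "x mod P = 0 \<Longrightarrow> chi x = 0"
  by (simp add: chi_def)

lemma chi_mod: "chi (x mod P) = chi x"
  by (simp add: chi_def cong_def)

lemma chi_mult: "chi (x * y) = chi x * chi y"
proof (cases "x mod P = 0 \<or> y mod P = 0")
  case True
  then have "(x * y) mod P = 0"
    by (metis mod_mult_left_eq mod_mult_right_eq mult_zero_left mult_zero_right mod_0)
  with True show ?thesis
    by (auto simp: chi_zero)
next
  case False
  then obtain a b where a: "[int g ^ a = x] (mod P)" and b: "[int g ^ b = y] (mod P)"
    using ex_generator_power_cong by blast
  have "(x * y) mod P \<noteq> 0"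
    using False P_prime by (metis dvd_eq_mod_eq_0 prime_dvd_mult_iff)
  moreover have "[int g ^ (a + b) = x * y] (mod P)"
    unfolding power_add using a b by (rule cong_mult)
  ultimately have "chi (x * y) = \<i> ^ (a + b)"
    by (rule chi_eq_power)
  then show ?thesis
    using False a b by (simp add: chi_eq_power power_add)
qed

lemma generator_mod_P: "int g mod P \<noteq> 0"
  using generator int_mod_P_eq_self by (auto simp: is_generator_def)

lemma chi_generator: "chi (int g) = \<i>"
  using chi_eq_power [OF generator_mod_P, of 1] by simp

lemma chi_one: "chi 1 = 1"
  using chi_eq_power[of 1 0] p_gt_1 by simp

lemma chi_values: "x mod P \<noteq> 0 \<Longrightarrow> chi x \<in> {1, \<i>, -1, -\<i>}"
proof -
  assume "x mod P \<noteq> 0"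
  then obtain k where "chi x = \<i> ^ (k mod 4)"
    using ex_generator_power_cong chi_eq_power power_i_mod_4 by metis
  moreover have "k mod 4 \<in> {0, 1, 2, 3}"
    by auto
  ultimately show ?thesis
    by (auto simp: power3_eq_cube)
qed

lemma chi_power_4: "chi x ^ 4 = (if x mod P = 0 then 0 else 1)"
  using chi_values[of x] by (auto simp: chi_zero numeral_eq_Suc)

lemma cnj_chi: "cnj (chi x) = chi x ^ 3"
  using chi_values[of x] by (cases "x mod P = 0") (auto simp: chi_zero numeral_eq_Suc)

lemma sum_chi_power:
  assumes "k > 0"
  shows "(\<Sum>x\<in>Zp. chi x ^ k) = (if 4 dvd k then of_nat (p - 1) else 0)"
proof (cases "4 dvd k")
  case True
  then obtain n where "k = 4 * n"
    by blast
  then have "chi x ^ k = (if x = 0 then 0 else 1)" if "x \<in> Zp" for x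
    using that assms by (simp add: power_mult chi_power_4)
  then have "(\<Sum>x\<in>Zp. chi x ^ k) = (\<Sum>x\<in>Zp - {0}. 1)"
    by (simp add: sum.If_cases Diff_eq Int_commute)
  also have "\<dots> = of_nat (p - 1)"
    using p_gt_1 by (simp add: of_nat_diff)
  finally show ?thesis
    using True by simp
next
  case False
  have "(\<Sum>x\<in>Zp. chi x ^ k) = (\<Sum>x\<in>Zp. chi (int g * x) ^ k)"
    by (rule sum_residues_scale [symmetric]) (simp_all add: prime_p generator_mod_P chi_mod)
  also have "\<dots> = \<i> ^ k * (\<Sum>x\<in>Zp. chi x ^ k)"
    by (simp add: chi_mult chi_generator power_mult_distrib sum_distrib_left)
  finally have "(\<i> ^ k - 1) * (\<Sum>x\<in>Zp. chi x ^ k) = 0"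
    by (simp add: algebra_simps)
  moreover have "(\<i>::complex) ^ k \<noteq> \<i> ^ 0"
    using False by (simp only: power_i_eq_iff cong_0_iff) simp
  ultimately show ?thesis
    using False by simp
qed

definition corr :: "nat \<Rightarrow> nat \<Rightarrow> int \<Rightarrow> complex" where
  "corr j k a = (\<Sum>z\<in>Zp. chi (z + a) ^ j * chi z ^ k)"

lemma chi_add_mod: "chi (x + y mod P) = chi (x + y)"
  by (metis chi_mod mod_add_right_eq)

lemma corr_mod: "corr j k (a mod P) = corr j k a"
  by (simp add: corr_def chi_add_mod)

lemma corr_0: "corr j k 0 = (\<Sum>z\<in>Zp. chi z ^ (j + k))"
  by (simp add: corr_def power_add)

lemma corr_scale:
  assumes "a mod P \<noteq> 0"
  shows "corr j k a = chi a ^ (j + k) * corr j k 1"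
proof -
  have "corr j k a = (\<Sum>t\<in>Zp. chi (a * t + a) ^ j * chi (a * t) ^ k)"
    unfolding corr_def
    by (rule sum_residues_scale [symmetric])
       (simp_all add: prime_p assms chi_mod, metis chi_add_mod add.commute)
  also have "\<dots> = (\<Sum>t\<in>Zp. chi a ^ (j + k) * (chi (t + 1) ^ j * chi t ^ k))"
  proof (rule sum.cong [OF refl])
    fix t
    have "a * t + a = a * (t + 1)"
      by (simp add: algebra_simps)
    then show "chi (a * t + a) ^ j * chi (a * t) ^ k = chi a ^ (j + k) * (chi (t + 1) ^ j * chi t ^ k)"
      by (simp add: chi_mult power_mult_distrib power_add)
  qed
  finally show ?thesis
    by (simp add: corr_def sum_distrib_left)
qed

lemma sum_corr: "(\<Sum>a\<in>Zp. corr j k a) = (\<Sum>z\<in>Zp. chi z ^ j) * (\<Sum>z\<in>Zp. chi z ^ k)"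
proof -
  have "(\<Sum>a\<in>Zp. corr j k a) = (\<Sum>z\<in>Zp. (\<Sum>a\<in>Zp. chi (a + z) ^ j) * chi z ^ k)"
    unfolding corr_def by (subst sum.swap) (simp add: sum_distrib_right add.commute)
  also have "\<dots> = (\<Sum>z\<in>Zp. (\<Sum>a\<in>Zp. chi a ^ j) * chi z ^ k)"
    using p_gt_1 sum_residues_shift[of P "\<lambda>a. chi a ^ j"] by (simp add: chi_mod)
  finally show ?thesis
    by (simp add: sum_distrib_left)
qed

lemma sum_residues_split_zero: "(\<Sum>x\<in>Zp. f x) = f 0 + (\<Sum>x\<in>{1..<P}. f x)"
proof -
  have "Zp = insert 0 {1..<P}"
    using p_gt_1 by auto
  then show ?thesis
    by simp
qed

lemma corr_conjugate_pair:
  assumes "\<not> 4 dvd j" and "4 dvd j + k"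
  shows "corr j k 1 = -1"
proof -
  have "j > 0"
    using assms(1) by (cases j) simp_all
  obtain n where n: "j + k = 4 * n"
    using assms(2) by blast
  have "(\<Sum>a\<in>Zp. corr j k a) = corr j k 0 + (\<Sum>a\<in>{1..<P}. corr j k a)"
    by (rule sum_residues_split_zero)
  also have "corr j k 0 = of_nat (p - 1)"
    using \<open>j > 0\<close> assms(2) by (simp add: corr_0 sum_chi_power)
  also have "(\<Sum>a\<in>{1..<P}. corr j k a) = (\<Sum>a\<in>{1..<P}. corr j k 1)"
  proof (rule sum.cong [OF refl])
    fix a
    assume "a \<in> {1..<P}"
    then show "corr j k a = corr j k 1"
      using corr_scale[of a j k] by (simp add: power_mult chi_power_4 n)
  qed
  finally have "(\<Sum>a\<in>Zp. corr j k a) = of_nat (p - 1) + of_nat (p - 1) * corr j k 1"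
    using p_gt_1 by (simp add: of_nat_diff)
  moreover have "(\<Sum>a\<in>Zp. corr j k a) = 0"
    using \<open>j > 0\<close> assms(1) by (simp add: sum_corr sum_chi_power)
  ultimately have "of_nat (p - 1) * (corr j k 1 + 1) = 0"
    by (simp add: algebra_simps)
  then show ?thesis
    using p_gt_1 by (simp add: add_eq_0_iff2)
qed

lemma sum_chi_shift_power_4_mult:
  "(\<Sum>t\<in>Zp. chi (t + 1) ^ 4 * h t) = (\<Sum>t\<in>Zp. h t) - h (P - 1)"
proof -
  have "P - 1 \<in> Zp"
    using p_gt_1 by simp
  moreover have "chi (t + 1) ^ 4 = (if t = P - 1 then 0 else 1)" if "t \<in> Zp" for t
    using that by (auto simp: chi_power_4 mod_pos_pos_trivial)
  ultimately show ?thesis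
    by (simp add: sum.remove [of Zp "P - 1"] sum.If_cases)
qed

lemma sum_mult_chi_power_4:
  "(\<Sum>t\<in>Zp. h t * chi t ^ 4) = (\<Sum>t\<in>Zp. h t) - h 0"
proof -
  have "chi t ^ 4 = (if t = 0 then 0 else 1)" if "t \<in> Zp" for t
    using that by (auto simp: chi_power_4)
  then show ?thesis
    by (simp add: sum_residues_split_zero)
qed

lemma corr_principal_left: "corr 4 k 1 = (\<Sum>z\<in>Zp. chi z ^ k) - chi (-1) ^ k"
proof -
  have "(P - 1) mod P = (-1) mod P"
    by (simp add: mod_diff_left_eq [symmetric])
  then have "chi (P - 1) = chi (-1)"
    by (metis chi_mod)
  then show ?thesis
    by (simp add: corr_def sum_chi_shift_power_4_mult)
qed

lemma corr_principal_right: "corr j 4 1 = (\<Sum>z\<in>Zp. chi z ^ j) - 1"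
  using p_gt_1 sum_residues_shift[of P "\<lambda>z. chi z ^ j" 1]
  by (simp add: corr_def sum_mult_chi_power_4 chi_mod chi_one)

definition jacobi :: complex where
  "jacobi = corr 1 1 1"

lemma corr_1_1: "corr 1 1 c = chi c ^ 2 * jacobi"
proof (cases "c mod P = 0")
  case True
  then have "corr 1 1 c = corr 1 1 0"
    by (metis corr_mod)
  also have "\<dots> = (\<Sum>z\<in>Zp. chi z ^ 2)"
    by (simp add: corr_0 power2_eq_square)
  finally show ?thesis
    using True sum_chi_power[of 2] by (simp add: chi_zero)
next
  case False
  then show ?thesis
    by (simp add: corr_scale jacobi_def power2_eq_square)
qed

lemma corr_1_3: "corr 1 3 e = (if e mod P = 0 then of_nat (p - 1) else -1)"
proof (cases "e mod P = 0")
  case True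
  then have "corr 1 3 e = corr 1 3 0"
    by (metis corr_mod)
  then show ?thesis
    using True by (simp add: corr_0 sum_chi_power)
next
  case False
  then show ?thesis
    using corr_conjugate_pair[of 1 3] by (simp add: corr_scale chi_power_4)
qed

lemma jacobi_norm: "jacobi * cnj jacobi = of_nat p"
proof -
  have "(\<Sum>c\<in>Zp. corr 1 1 c * cnj (corr 1 1 c)) = (\<Sum>e\<in>Zp. corr 1 3 e * corr 1 3 e)"
    using sum_correlation_norm_square[of P chi] p_gt_1 by (simp add: corr_def chi_mod cnj_chi)
  moreover have "corr 1 1 c * cnj (corr 1 1 c) = chi c ^ 4 * (jacobi * cnj jacobi)" for c
    unfolding corr_1_1 using chi_values[of c] by (cases "c mod P = 0") (auto simp: chi_zero)
  ultimately have "of_nat (p - 1) * (jacobi * cnj jacobi)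
      = (\<Sum>e\<in>Zp. corr 1 3 e * corr 1 3 e)"
    by (simp add: sum_distrib_right [symmetric] sum_chi_power)
  also have "\<dots> = of_nat (p - 1) * of_nat (p - 1) + (\<Sum>e\<in>{1..<P}. 1)"
    unfolding sum_residues_split_zero[of "\<lambda>e. corr 1 3 e * corr 1 3 e"] unfolding corr_1_3
    by (intro arg_cong2[where f="(+)"] sum.cong) simp_all
  also have "\<dots> = of_nat (p - 1) * of_nat (p - 1) + of_nat (p - 1)"
    using p_gt_1 by (simp add: of_nat_diff)
  finally have "of_nat (p - 1) * (jacobi * cnj jacobi) = of_nat (p - 1) * of_nat p"
    using p_gt_1 by (simp add: of_nat_diff algebra_simps)
  then show ?thesis
    using p_gt_1 by simp
qed

lemma corr_3_3: "corr 3 3 1 = cnj jacobi"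
proof -
  have "cnj (chi x) = chi x ^ 3" for x
    by (rule cnj_chi)
  then show ?thesis
    by (simp add: jacobi_def corr_def cnj_sum)
qed

lemma Gaussian_integer_chi: "Re (chi x) \<in> \<int> \<and> Im (chi x) \<in> \<int>"
  using chi_values[of x] by (cases "x mod P = 0") (auto simp: chi_zero)

lemma Gaussian_integer_jacobi: "Re jacobi \<in> \<int>" "Im jacobi \<in> \<int>"
proof -
  have "jacobi = (\<Sum>t\<in>Zp. chi ((t + 1) * t))"
    by (simp add: jacobi_def corr_def chi_mult)
  then show "Re jacobi \<in> \<int>" "Im jacobi \<in> \<int>"
    using Gaussian_integer_chi by (simp_all add: Re_sum Im_sum Ints_sum)
qed

lemma cyclotomic_class_iff_chi:
  assumes "e * q = 4" and "j < e"
  shows "x \<in> cyclotomic_class p g e j \<longleftrightarrow> x \<in> {1..p-1} \<and> chi (int x) ^ q = \<i> ^ (j * q)"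
proof -
  have "q > 0"
    using assms(1) by (cases q) simp_all
  have chi_x: "chi (int x) = \<i> ^ n" if "x \<in> {1..p-1}" and "[x = g ^ n] (mod p)" for n
    using that int_mod_P_eq_self[OF that(1)]
    by (intro chi_eq_power) (simp_all add: cong_sym_eq flip: cong_int_iff)
  have "chi (int x) ^ q = \<i> ^ (j * q) \<longleftrightarrow> [n = j] (mod e)"
    if "x \<in> {1..p-1}" and "[x = g ^ n] (mod p)" for n
    using chi_x[OF that] \<open>q > 0\<close>
    by (simp add: power_mult [symmetric] power_i_eq_iff cong_def mod_mult_mult2 flip: assms(1))
  moreover have "\<exists>n. [x = g ^ n] (mod p)" if "x \<in> {1..p-1}"
    using ex_generator_power_cong[of "int x"] that
    by (auto simp: cong_sym_eq simp flip: cong_int_iff)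
  moreover have "(\<exists>k. n = e * k + j) \<longleftrightarrow> [n = j] (mod e)" for n
    using assms(2) by (auto simp: cong_def) (metis mult_div_mod_eq add.commute)
  ultimately show ?thesis
    unfolding cyclotomic_class_def
    by (smt (verit) cong_def mem_Collect_eq)
qed

lemma chi_square_iff_cyclotomic_class_2:
  assumes "x \<in> {1..p-1}"
  shows "chi (int x) ^ 2 = (if x \<in> cyclotomic_class p g 2 0 then 1 else -1)"
proof -
  have "int x mod P \<noteq> 0"
    using assms int_mod_P_eq_self by auto
  then have "chi (int x) ^ 2 = 1 \<or> chi (int x) ^ 2 = -1"
    using chi_values [of "int x"] by (auto simp: power2_eq_square)
  then show ?thesis
    using cyclotomic_class_iff_chi [of 2 2 0 x] assms by auto
qed

lemma cyclotomic_class_2_1_iff: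
  "x \<in> cyclotomic_class p g 2 1 \<longleftrightarrow> x \<in> {1..p-1} \<and> x \<notin> cyclotomic_class p g 2 0"
  using cyclotomic_class_iff_chi [of 2 2 1 x] chi_square_iff_cyclotomic_class_2 [of x] by auto

abbreviation D :: "nat set" where
  "D \<equiv> cyclotomic_class p g 4 0 \<union> cyclotomic_class p g 4 1"

lemma D_subset: "D \<subseteq> {1..p-1}"
  using cyclotomic_class_subset by blast

lemma mem_D_iff: "x \<in> D \<longleftrightarrow> x \<in> {1..p-1} \<and> (chi (int x) = 1 \<or> chi (int x) = \<i>)"
  using cyclotomic_class_iff_chi[of 4 1 0 x] cyclotomic_class_iff_chi[of 4 1 1 x] by auto

text \<open>On \<open>\<chi> = 1, \<i>, -1, -\<i>\<close> this takes the values \<open>1, 1, 0, 0\<close>, and it vanishes where \<open>\<chi>\<close> does.\<close>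

definition D_indicator :: "int \<Rightarrow> complex" where
  "D_indicator z = (2 * chi z ^ 4 + (1 - \<i>) * chi z + (1 + \<i>) * chi z ^ 3) / 4"

lemma D_indicator_eq: "D_indicator z = of_bool (z mod P \<in> int ` D)"
proof (cases "z mod P = 0")
  case True
  then show ?thesis
    using D_subset by (auto simp: D_indicator_def chi_zero)
next
  case False
  define n where "n = nat (z mod P)"
  have "0 < z mod P" "z mod P < P"
    using False p_gt_1 by (simp_all add: order_le_neq_trans)
  then have n: "z mod P = int n" "n \<in> {1..p-1}"
    by (auto simp: n_def)
  have "z mod P \<in> int ` D \<longleftrightarrow> n \<in> D"
    unfolding n(1) by (simp add: image_iff)
  also have "\<dots> \<longleftrightarrow> chi z = 1 \<or> chi z = \<i>"
    using n mem_D_iff[of n] chi_mod[of z] by simp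
  finally have "z mod P \<in> int ` D \<longleftrightarrow> chi z = 1 \<or> chi z = \<i>" .
  then show ?thesis
    using chi_values[OF False] False unfolding D_indicator_def chi_power_4
    by (elim insertE emptyE) (simp_all add: power3_eq_cube complex_eq_iff)
qed

lemma diff_count_eq_sum_D_indicator:
  "of_nat (diff_count p D a) = (\<Sum>z\<in>Zp. D_indicator (z + int a) * D_indicator z)"
proof -
  have "{1..p-1} \<subseteq> {..<p}"
    using p_gt_1 by auto
  then have "D \<subseteq> {..<p}"
    using D_subset by blast
  then have "diff_count p D a = card {z \<in> int ` D. (z + int a) mod P \<in> int ` D}"
    by (rule diff_count_eq_card)
  also have "{z \<in> int ` D. (z + int a) mod P \<in> int ` D}
      = Zp \<inter> {z. (z + int a) mod P \<in> int ` D} \<inter> int ` D"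
    using \<open>D \<subseteq> {..<p}\<close> by force
  finally show ?thesis
    by (simp add: D_indicator_eq)
qed

end

locale quartic_character_5_mod_8 = quartic_character +
  assumes p_mod_8: "p mod 8 = 5"
begin

lemma chi_minus_one: "chi (-1) = -1"
proof -
  define f where "f = (p - 1) div 4"
  have f: "p - 1 = 4 * f" and "odd f"
    using p_mod_8 unfolding f_def by presburger+
  have "[g ^ (2 * f) * g ^ (2 * f) = 1] (mod p)"
    using ord_g ord_works[of g p] f by (simp flip: power_add)
  then have "[int g ^ (2 * f) * int g ^ (2 * f) = 1] (mod P)"
    by (metis cong_int_iff of_nat_1 of_nat_mult of_nat_power)
  moreover have "\<not> [int g ^ (2 * f) = 1] (mod P)"
  proof
    assume "[int g ^ (2 * f) = 1] (mod P)"
    then have "[g ^ (2 * f) = 1] (mod p)"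
      by (metis cong_int_iff of_nat_1 of_nat_power)
    moreover have "0 < 2 * f" "2 * f < ord p g"
      using \<open>odd f\<close> f ord_g by (auto intro: odd_pos)
    ultimately show False
      using ord_minimal by blast
  qed
  moreover have "0 < int g ^ (2 * f)"
    using generator by (simp add: is_generator_def)
  ultimately have "[int g ^ (2 * f) = -1] (mod P)"
    using cong_square[OF P_prime] by blast
  moreover have "(-1) mod P \<noteq> 0"
    using p_gt_1 by (simp add: mod_eq_0_iff_dvd)
  ultimately have "chi (-1) = \<i> ^ (2 * f)"
    using chi_eq_power by blast
  then show ?thesis
    using \<open>odd f\<close> by (simp add: power_mult)
qed

lemma corr_values:
  "corr 1 1 1 = jacobi" "corr 1 3 1 = -1" "corr 1 4 1 = -1"
  "corr 3 1 1 = -1" "corr 3 3 1 = jacobi - 2 * \<i> * of_real (Im jacobi)" "corr 3 4 1 = -1"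
  "corr 4 1 1 = 1" "corr 4 3 1 = 1" "corr 4 4 1 = of_nat p - 2"
proof -
  show "corr 1 1 1 = jacobi"
    by (simp add: jacobi_def)
  show "corr 1 3 1 = -1" "corr 3 1 1 = -1"
    by (simp_all add: corr_conjugate_pair)
  show "corr 3 3 1 = jacobi - 2 * \<i> * of_real (Im jacobi)"
    by (simp add: corr_3_3 complex_eq_iff)
  show "corr 1 4 1 = -1" "corr 3 4 1 = -1"
    using sum_chi_power [of 1] sum_chi_power [of 3] by (simp_all add: corr_principal_right)
  show "corr 4 1 1 = 1" "corr 4 3 1 = 1" "corr 4 4 1 = of_nat p - 2"
    using p_gt_1 sum_chi_power [of 1] sum_chi_power [of 3] sum_chi_power [of 4]
    by (simp_all add: corr_principal_left chi_minus_one of_nat_diff)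
qed

lemma sum_D_indicator_shift:
  assumes "a mod P \<noteq> 0"
  shows "(\<Sum>z\<in>Zp. D_indicator (z + a) * D_indicator z)
    = (of_nat p - 3 + chi a ^ 2 * of_real (Im jacobi)) / 4"
proof -
  define c :: "nat \<Rightarrow> complex"
    where "c j = (if j = 4 then 1 / 2 else if j = 1 then (1 - \<i>) / 4 else (1 + \<i>) / 4)" for j
  define J :: "nat set" where "J = {1, 3, 4}"
  define w where "w = chi a"
  have D_indicator_sum: "D_indicator z = (\<Sum>j\<in>J. c j * chi z ^ j)" for z
    by (simp add: D_indicator_def J_def c_def field_simps)
  have "(\<Sum>z\<in>Zp. D_indicator (z + a) * D_indicator z)
      = (\<Sum>z\<in>Zp. \<Sum>j\<in>J. \<Sum>k\<in>J. c j * c k * (chi (z + a) ^ j * chi z ^ k))"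
    unfolding D_indicator_sum sum_product by (simp add: ac_simps)
  also have "\<dots> = (\<Sum>j\<in>J. \<Sum>k\<in>J. c j * c k * corr j k a)"
    unfolding corr_def sum_distrib_left
    by (subst sum.swap, rule sum.cong [OF refl], rule sum.swap)
  also have "\<dots> = (\<Sum>j\<in>J. \<Sum>k\<in>J. c j * c k * w ^ (j + k) * corr j k 1)"
    using assms by (simp add: corr_scale w_def mult.assoc)
  also have "\<dots> = c 1 * c 1 * w ^ 2 * corr 1 1 1 + c 1 * c 3 * w ^ 4 * corr 1 3 1
      + c 1 * c 4 * w ^ 5 * corr 1 4 1 + c 3 * c 1 * w ^ 4 * corr 3 1 1
      + c 3 * c 3 * w ^ 6 * corr 3 3 1 + c 3 * c 4 * w ^ 7 * corr 3 4 1
      + c 4 * c 1 * w ^ 5 * corr 4 1 1 + c 4 * c 3 * w ^ 7 * corr 4 3 1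
      + c 4 * c 4 * w ^ 8 * corr 4 4 1"
    by (simp add: J_def eval_nat_numeral algebra_simps)
  also have "\<dots> = (of_nat p - 3 + w ^ 2 * of_real (Im jacobi)) / 4"
  proof -
    have "w ^ 4 = 1"
      using assms by (simp add: w_def chi_power_4)
    then have "w ^ (4 + n) = w ^ n" for n
      by (simp add: power_add)
    from this [of 1] this [of 2] this [of 3] this [of 4]
    have w: "w ^ 5 = w" "w ^ 6 = w ^ 2" "w ^ 7 = w ^ 3" "w ^ 8 = 1"
      using \<open>w ^ 4 = 1\<close> by simp_all
    show ?thesis
      unfolding w corr_values by (simp add: c_def field_simps \<open>w ^ 4 = 1\<close>)
  qed
  finally show ?thesis
    by (simp add: w_def)
qed

lemma diff_count_formula:
  assumes "a \<in> {1..p-1}"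
  shows "4 * real (diff_count p D a)
    = real p - 3 + (if a \<in> cyclotomic_class p g 2 0 then Im jacobi else - Im jacobi)"
proof -
  have "int a mod P \<noteq> 0"
    using assms int_mod_P_eq_self by auto
  then have "of_nat (diff_count p D a) = (of_nat p - 3 + chi (int a) ^ 2 * of_real (Im jacobi)) / 4"
    by (simp only: diff_count_eq_sum_D_indicator sum_D_indicator_shift [OF \<open>int a mod P \<noteq> 0\<close>])
  then have "complex_of_real (4 * real (diff_count p D a))
      = of_nat p - 3 + chi (int a) ^ 2 * of_real (Im jacobi)"
    by (simp add: mult.commute)
  also have "\<dots> = complex_of_real
      (real p - 3 + (if a \<in> cyclotomic_class p g 2 0 then Im jacobi else - Im jacobi))"
    using assms by (simp add: chi_square_iff_cyclotomic_class_2)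
  finally show ?thesis
    by (simp only: of_real_eq_iff)
qed

lemma diff_count_eq_iff:
  assumes "a \<in> {1..p-1}"
  shows "diff_count p D a = (p - 5) div 4 \<longleftrightarrow>
    (if a \<in> cyclotomic_class p g 2 0 then Im jacobi else - Im jacobi) = -2"
proof -
  have p5: "4 * ((p - 5) div 4) = p - 5" "p \<ge> 5"
    using p_mod_8 by presburger+
  have "diff_count p D a = (p - 5) div 4 \<longleftrightarrow> 4 * diff_count p D a = p - 5"
    using p5(1) by linarith
  also have "\<dots> \<longleftrightarrow> real (4 * diff_count p D a) = real (p - 5)"
    by (simp only: of_nat_eq_iff)
  also have "\<dots> \<longleftrightarrow> 4 * real (diff_count p D a) = real p - 5"
    using p5(2) by (simp add: of_nat_diff)
  finally show ?thesis
    using diff_count_formula [OF assms] by auto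
qed

lemma Im_jacobi_eq_2:
  assumes "odd s" and "int p = s^2 + 4"
  shows "Im jacobi = 2 \<or> Im jacobi = -2"
proof -
  obtain A B :: int where A: "Re jacobi = of_int A" and B: "Im jacobi = of_int B"
    using Gaussian_integer_jacobi by (metis Ints_cases)
  have "complex_of_real ((Re jacobi)^2 + (Im jacobi)^2) = complex_of_real (real p)"
    using jacobi_norm by (simp add: complex_mult_cnj)
  then have "real_of_int (A^2 + B^2) = real_of_int (int p)"
    using A B by (simp only: of_real_eq_iff) simp
  then have sum_squares: "A^2 + B^2 = int p"
    by (simp only: of_int_eq_iff)
  have "even B"
  proof -
    have "1 \<in> cyclotomic_class p g 2 0"
      using cyclotomic_class_iff_chi [of 2 2 0 1] chi_one p_gt_1 by simp
    then have "4 * real (diff_count p D 1) = real p - 3 + of_int B"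
      using diff_count_formula [of 1] p_gt_1 B by simp
    then have "real_of_int (4 * int (diff_count p D 1)) = real_of_int (int p - 3 + B)"
      by simp
    then have "4 * int (diff_count p D 1) = int p - 3 + B"
      by (simp only: of_int_eq_iff)
    then show ?thesis
      using p_mod_8 by presburger
  qed
  moreover have "s^2 + 4 = int p"
    using assms(2) by simp
  ultimately have "B^2 = 4"
    using prime_two_squares_even_square_eq_4 [OF P_prime sum_squares] assms(1) by blast
  then have "B = 2 \<or> B = -2"
    using power2_eq_iff by fastforce
  then show ?thesis
    using B by auto
qed

end

theorem lemma4:
  fixes p g :: nat and s :: int
  assumes "prime p" and "p mod 8 = 5"
    and "odd s" and "int p = s^2 + 4"
    and "is_generator p g"
  defines "D \<equiv> cyclotomic_class p g 4 0 \<union> cyclotomic_class p g 4 1"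
  defines "S_D \<equiv> {a \<in> {1..p-1}. diff_count p D a = (p - 5) div 4}"
  shows "S_D = cyclotomic_class p g 2 0 \<or> S_D = cyclotomic_class p g 2 1"
proof -
  interpret quartic_character_5_mod_8 p g
    using assms(1,2,5) by unfold_locales presburger+
  have S_D_iff: "a \<in> S_D \<longleftrightarrow> a \<in> {1..p-1} \<and>
      (if a \<in> cyclotomic_class p g 2 0 then Im jacobi else - Im jacobi) = -2" for a
    using diff_count_eq_iff [of a] by (auto simp: S_D_def D_def)
  from Im_jacobi_eq_2 [OF assms(3,4)] show ?thesis
  proof
    assume "Im jacobi = 2"
    then have "S_D = cyclotomic_class p g 2 1"
      using S_D_iff cyclotomic_class_2_1_iff by (auto split: if_splits)
    then show ?thesis ..
  next
    assume "Im jacobi = -2"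
    then have "S_D = cyclotomic_class p g 2 0"
      using S_D_iff cyclotomic_class_subset [of p g 2 0] by (auto split: if_splits)
    then show ?thesis ..
  qed
qed

end
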